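(* Let $\mathcal{A}$ and $\mathcal{B}$ be two copies of the same finite-dimensional Hilbert space and $\rho$ a density operator on $\mathcal{A}\otimes\mathcal{B}$. Then the swap test on $\mathcal{A}\otimes\mathcal{B}$ applied to $\rho$ returns the antisymmetric outcome with probability at least $\tfrac12-\tfrac12F(\operatorname{tr}_{\mathcal{A}}\rho,\operatorname{tr}_{\mathcal{B}}\rho)$.
   Context: Let $W$ be the swap operator on $\mathcal{A}\otimes\mathcal{B}$, $W|a\rangle|b\rangle=|b\rangle|a\rangle$. The swap test is the two-outcome projective measurement $\{(\mathbb{1}+W)/2,(\mathbb{1}-W)/2\}$ (projections onto the symmetric and antisymmetric subspaces); the antisymmetric outcome occurs with probability $\operatorname{tr}\big(\tfrac{\mathbb{1}-W}{2}\rho\big)$. Fidelity: $F(\sigma,\xi)=\operatorname{tr}\sqrt{\sqrt\sigma\,\xi\sqrt\sigma}$; the two reduced states $\operatorname{tr}_{\mathcal{A}}\rho$ and $\operatorname{tr}_{\mathcal{B}}\rho$ are regarded as density operators on the same space via the identification of $\mathcal{A}$ and $\mathcal{B}$. *)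

theory Defs
  imports Complex_Main "Jordan_Normal_Form.Matrix"
begin

text \<open>Finite-dimensional Hilbert space C^d; A and B are two copies of it.
  The composite space A (x) B is C^(d*d), basis vector |i>|j> has index i*d+j.\<close>

definition mtrace :: "complex mat \<Rightarrow> complex" where
  "mtrace A = (\<Sum>i<dim_row A. A $$ (i, i))"

definition psd :: "nat \<Rightarrow> complex mat \<Rightarrow> bool" where
  "psd n A \<longleftrightarrow> A \<in> carrier_mat n n
     \<and> (\<forall>i<n. \<forall>j<n. A $$ (i, j) = cnj (A $$ (j, i)))
     \<and> (\<forall>v \<in> carrier_vec n. (A *\<^sub>v v) \<bullet>c v \<in> \<real> \<and> 0 \<le> Re ((A *\<^sub>v v) \<bullet>c v))"

definition density_op :: "nat \<Rightarrow> complex mat \<Rightarrow> bool" where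
  "density_op n \<rho> \<longleftrightarrow> psd n \<rho> \<and> mtrace \<rho> = 1"

definition msqrt :: "nat \<Rightarrow> complex mat \<Rightarrow> complex mat" where
  "msqrt n A = (THE B. psd n B \<and> B * B = A)"

definition fidelity :: "nat \<Rightarrow> complex mat \<Rightarrow> complex mat \<Rightarrow> real" where
  "fidelity n \<sigma> \<xi> = Re (mtrace (msqrt n (msqrt n \<sigma> * \<xi> * msqrt n \<sigma>)))"

definition ptrace_A :: "nat \<Rightarrow> complex mat \<Rightarrow> complex mat" where
  "ptrace_A d \<rho> = mat d d (\<lambda>(i, j). \<Sum>k<d. \<rho> $$ (k * d + i, k * d + j))"

definition ptrace_B :: "nat \<Rightarrow> complex mat \<Rightarrow> complex mat" where
  "ptrace_B d \<rho> = mat d d (\<lambda>(i, j). \<Sum>k<d. \<rho> $$ (i * d + k, j * d + k))"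

text \<open>Swap operator W |a>|b> = |b>|a>.\<close>
definition swap_op :: "nat \<Rightarrow> complex mat" where
  "swap_op d = mat (d * d) (d * d) (\<lambda>(r, c).
      if r div d = c mod d \<and> r mod d = c div d then 1 else 0)"

definition swap_test_antisym_prob :: "nat \<Rightarrow> complex mat \<Rightarrow> real" where
  "swap_test_antisym_prob d \<rho> =
     Re (mtrace ((1 / 2 :: complex) \<cdot>\<^sub>m (1\<^sub>m (d * d) - swap_op d) * \<rho>))"

end

theory Submission
  imports Defs "Jordan_Normal_Form.Schur_Decomposition"
begin

text \<open>Write \<open>\<rho> = K K\<^sup>*\<close> and reshape the columns of \<open>K\<close>, vectors in \<open>\<A> \<otimes> \<B>\<close>, into
  \<open>d \<times> d\<close> blocks. Placing these blocks side by side gives matrices \<open>X\<close>, \<open>Y\<close> with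
  \<open>X X\<^sup>* = tr\<^sub>B \<rho>\<close>, \<open>Y Y\<^sup>* = tr\<^sub>A \<rho>\<close> and \<open>tr (X\<^sup>* Y) = tr (W \<rho>)\<close>. Since the antisymmetric
  outcome has probability \<open>(1 - Re tr (W \<rho>)) / 2\<close>, it suffices to show
  \<open>Re tr (X\<^sup>* Y) \<le> F (Y Y\<^sup>*, X X\<^sup>*)\<close>. For this factor \<open>Y = R T\<close> with \<open>R = \<surd>(Y Y\<^sup>*)\<close> and
  \<open>T\<close> a contraction, and \<open>R X = S V\<close> with \<open>S = \<surd>(R X X\<^sup>* R)\<close> and \<open>V\<close> a contraction. Then
  \<open>X\<^sup>* Y = V\<^sup>* S T\<close>, and \<open>2 Re tr (V\<^sup>* S T) \<le> tr (V\<^sup>* S V) + tr (T\<^sup>* S T) \<le> 2 tr S\<close>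
  because \<open>S\<close> is positive semidefinite; \<open>tr S\<close> is the fidelity.\<close>

section \<open>Adjoints, traces and inner products\<close>

lemma mat_adjoint_eq_mat:
  "mat_adjoint (A :: complex mat) = mat (dim_col A) (dim_row A) (\<lambda>(i, j). cnj (A $$ (j, i)))"
  unfolding mat_adjoint_def by (rule eq_matI) (auto simp: mat_of_rows_def)

lemma mat_adjoint_dim [simp]:
  "dim_row (mat_adjoint (A :: complex mat)) = dim_col A"
  "dim_col (mat_adjoint (A :: complex mat)) = dim_row A"
  by (simp_all add: mat_adjoint_eq_mat)

lemma mat_adjoint_index [simp]:
  "i < dim_col A \<Longrightarrow> j < dim_row A \<Longrightarrow> mat_adjoint (A :: complex mat) $$ (i, j) = cnj (A $$ (j, i))"
  by (simp add: mat_adjoint_eq_mat)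

lemma mat_adjoint_carrier [simp, intro]:
  "(A :: complex mat) \<in> carrier_mat n m \<Longrightarrow> mat_adjoint A \<in> carrier_mat m n"
  by auto

lemma mat_adjoint_mat_adjoint [simp]: "mat_adjoint (mat_adjoint (A :: complex mat)) = A"
  by (rule eq_matI) auto

lemma mat_adjoint_one [simp]: "mat_adjoint (1\<^sub>m n :: complex mat) = 1\<^sub>m n"
  by (rule eq_matI) auto

lemma mat_adjoint_minus:
  "B \<in> carrier_mat (dim_row A) (dim_col A) \<Longrightarrow>
    mat_adjoint ((A :: complex mat) - B) = mat_adjoint A - mat_adjoint B"
  by (rule eq_matI) auto

lemma index_mult_mat_sum:
  "i < dim_row A \<Longrightarrow> j < dim_col B \<Longrightarrow> dim_col A = dim_row B \<Longrightarrow>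
    (A * B) $$ (i, j) = (\<Sum>k<dim_col A. A $$ (i, k) * B $$ (k, j))"
  by (simp add: scalar_prod_def atLeast0LessThan)

lemma index_mult_mat_vec_sum:
  "i < dim_row A \<Longrightarrow> dim_vec v = dim_col A \<Longrightarrow> (A *\<^sub>v v) $ i = (\<Sum>j<dim_col A. A $$ (i, j) * v $ j)"
  by (simp add: scalar_prod_def atLeast0LessThan)

lemma cscalar_prod_sum: "dim_vec (v :: complex vec) = n \<Longrightarrow> u \<bullet>c v = (\<Sum>i<n. u $ i * cnj (v $ i))"
  by (simp add: scalar_prod_def atLeast0LessThan)

declare index_mult_mat(1) [simp del] index_mult_mat_vec [simp del]

lemma mult_mat_vec_zero [simp]: "A \<in> carrier_mat n m \<Longrightarrow> A *\<^sub>v 0\<^sub>v m = 0\<^sub>v n"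
  by (intro eq_vecI) (auto simp: index_mult_mat_vec_sum)

lemma zero_mult_mat_vec [simp]: "v \<in> carrier_vec m \<Longrightarrow> 0\<^sub>m n m *\<^sub>v v = 0\<^sub>v n"
  by (intro eq_vecI) (auto simp: index_mult_mat_vec_sum)

lemma mat_adjoint_mult:
  "dim_col A = dim_row B \<Longrightarrow> mat_adjoint ((A :: complex mat) * B) = mat_adjoint B * mat_adjoint A"
  by (rule eq_matI) (auto simp: index_mult_mat_sum mult.commute)

lemma mult_carrier_mat_dim:
  "dim_row A = nr \<Longrightarrow> B \<in> carrier_mat (dim_col A) nc \<Longrightarrow> A * B \<in> carrier_mat nr nc"
  by auto

lemma mtrace_mult_sum:
  "A \<in> carrier_mat n m \<Longrightarrow> B \<in> carrier_mat m n \<Longrightarrow>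
    mtrace (A * B) = (\<Sum>i<n. \<Sum>k<m. A $$ (i, k) * B $$ (k, i))"
  by (simp add: mtrace_def index_mult_mat_sum)

lemma mtrace_mult_comm:
  assumes "A \<in> carrier_mat n m" "B \<in> carrier_mat m n"
  shows "mtrace (A * B) = mtrace (B * A)"
  using assms by (simp add: mtrace_mult_sum sum.swap[of _ "{..<n}"] mult.commute)

lemma mtrace_mat_adjoint: "A \<in> carrier_mat n n \<Longrightarrow> mtrace (mat_adjoint A) = cnj (mtrace A)"
  by (simp add: mtrace_def)

lemma mtrace_minus:
  "A \<in> carrier_mat n n \<Longrightarrow> B \<in> carrier_mat n n \<Longrightarrow> mtrace (A - B) = mtrace A - mtrace B"
  by (simp add: mtrace_def sum_subtractf)

lemma mtrace_smult: "A \<in> carrier_mat n n \<Longrightarrow> mtrace (c \<cdot>\<^sub>m A) = c * mtrace A"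
  by (simp add: mtrace_def sum_distrib_left)

lemma mtrace_mult_mat_adjoint_eq_0:
  assumes A: "A \<in> carrier_mat n m" and tr: "mtrace (A * mat_adjoint A) = 0"
  shows "A = 0\<^sub>m n m"
proof (rule eq_matI)
  fix i j assume "i < dim_row (0\<^sub>m n m :: complex mat)" "j < dim_col (0\<^sub>m n m :: complex mat)"
  then have ij: "i < n" "j < m" by auto
  have "complex_of_real (\<Sum>i<n. \<Sum>k<m. (cmod (A $$ (i, k)))\<^sup>2) = mtrace (A * mat_adjoint A)"
    using A by (simp add: mtrace_mult_sum complex_norm_square del: of_real_power)
  then have "(\<Sum>i<n. \<Sum>k<m. (cmod (A $$ (i, k)))\<^sup>2) = 0"
    using tr by (simp only: of_real_eq_0_iff)
  with ij have "(cmod (A $$ (i, j)))\<^sup>2 = 0"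
    by (simp add: sum_nonneg_eq_0_iff sum_nonneg)
  with ij show "A $$ (i, j) = 0\<^sub>m n m $$ (i, j)" by simp
qed (use A in auto)

lemma cscalar_prod_mat_adjoint:
  assumes A: "(A :: complex mat) \<in> carrier_mat n m"
    and u: "u \<in> carrier_vec m" and v: "v \<in> carrier_vec n"
  shows "(A *\<^sub>v u) \<bullet>c v = u \<bullet>c (mat_adjoint A *\<^sub>v v)"
proof -
  have "(A *\<^sub>v u) \<bullet>c v = (\<Sum>i<n. (\<Sum>j<m. A $$ (i, j) * u $ j) * cnj (v $ i))"
    using assms by (simp add: cscalar_prod_sum index_mult_mat_vec_sum)
  also have "\<dots> = (\<Sum>j<m. u $ j * cnj (\<Sum>i<n. cnj (A $$ (i, j)) * v $ i))"
    by (simp add: sum_distrib_left sum_distrib_right mult_ac) (rule sum.swap)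
  also have "\<dots> = u \<bullet>c (mat_adjoint A *\<^sub>v v)"
    using assms by (simp add: cscalar_prod_sum index_mult_mat_vec_sum)
  finally show ?thesis .
qed

lemma cscalar_prod_commute:
  "(u :: complex vec) \<in> carrier_vec n \<Longrightarrow> v \<in> carrier_vec n \<Longrightarrow> v \<bullet>c u = cnj (u \<bullet>c v)"
  by (simp add: cscalar_prod_sum mult.commute)

lemma cscalar_prod_smult_left:
  "(u :: complex vec) \<in> carrier_vec n \<Longrightarrow> v \<in> carrier_vec n \<Longrightarrow> (c \<cdot>\<^sub>v u) \<bullet>c v = c * (u \<bullet>c v)"
  by (simp add: cscalar_prod_sum sum_distrib_left mult_ac)

lemma cscalar_prod_smult_right:
  "(u :: complex vec) \<in> carrier_vec n \<Longrightarrow> v \<in> carrier_vec n \<Longrightarrow> u \<bullet>c (c \<cdot>\<^sub>v v) = cnj c * (u \<bullet>c v)"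
  by (simp add: cscalar_prod_sum sum_distrib_left mult_ac)

lemma cscalar_prod_minus_left:
  "(u :: complex vec) \<in> carrier_vec n \<Longrightarrow> w \<in> carrier_vec n \<Longrightarrow> v \<in> carrier_vec n \<Longrightarrow>
    (u - w) \<bullet>c v = u \<bullet>c v - w \<bullet>c v"
  by (simp add: cscalar_prod_sum[of v n] sum_subtractf left_diff_distrib)

lemma cscalar_prod_self_real:
  assumes "(v :: complex vec) \<in> carrier_vec n"
  shows "v \<bullet>c v = complex_of_real (Re (v \<bullet>c v))"
  using conjugate_square_ge_0_vec[of v] by (simp add: less_eq_complex_def complex_eq_iff)

section \<open>Hermitian matrices and the spectral theorem\<close>

definition hermitian :: "complex mat \<Rightarrow> bool" where
  "hermitian A \<longleftrightarrow> mat_adjoint A = A"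

definition unitary :: "nat \<Rightarrow> complex mat \<Rightarrow> bool" where
  "unitary n U \<longleftrightarrow> U \<in> carrier_mat n n \<and> mat_adjoint U * U = 1\<^sub>m n \<and> U * mat_adjoint U = 1\<^sub>m n"

definition real_diag :: "nat \<Rightarrow> (nat \<Rightarrow> real) \<Rightarrow> complex mat" where
  "real_diag n f = mat n n (\<lambda>(i, j). if i = j then complex_of_real (f i) else 0)"

lemma real_diag_carrier [simp]: "real_diag n f \<in> carrier_mat n n"
  by (simp add: real_diag_def)

lemma real_diag_dim [simp]: "dim_row (real_diag n f) = n" "dim_col (real_diag n f) = n"
  by (simp_all add: real_diag_def)

lemma real_diag_index [simp]:
  "i < n \<Longrightarrow> j < n \<Longrightarrow> real_diag n f $$ (i, j) = (if i = j then complex_of_real (f i) else 0)"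
  by (simp add: real_diag_def)

lemma real_diag_mult: "real_diag n f * real_diag n g = real_diag n (\<lambda>i. f i * g i)"
  by (rule eq_matI) (auto simp: index_mult_mat_sum if_distrib cong: if_cong)

lemma real_diag_cong: "(\<And>i. i < n \<Longrightarrow> f i = g i) \<Longrightarrow> real_diag n f = real_diag n g"
  by (rule eq_matI) auto

lemma real_diag_one: "real_diag n (\<lambda>_. 1) = 1\<^sub>m n"
  by (rule eq_matI) auto

lemma hermitian_real_diag: "hermitian (real_diag n f)"
  unfolding hermitian_def by (rule eq_matI) auto

lemma index_real_diag_mult:
  "Y \<in> carrier_mat n m \<Longrightarrow> i < n \<Longrightarrow> j < m \<Longrightarrow>
    (real_diag n f * Y) $$ (i, j) = complex_of_real (f i) * Y $$ (i, j)"
  by (simp add: index_mult_mat_sum if_distrib[of "\<lambda>x. x * Y $$ (_, j)"] cong: if_cong)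

lemma hermitian_iff_index:
  assumes A: "A \<in> carrier_mat n n"
  shows "hermitian A \<longleftrightarrow> (\<forall>i<n. \<forall>j<n. A $$ (i, j) = cnj (A $$ (j, i)))"
proof
  assume "hermitian A"
  show "\<forall>i<n. \<forall>j<n. A $$ (i, j) = cnj (A $$ (j, i))"
  proof (intro allI impI)
    fix i j assume "i < n" "j < n"
    then have "mat_adjoint A $$ (i, j) = cnj (A $$ (j, i))" using A by simp
    then show "A $$ (i, j) = cnj (A $$ (j, i))" using \<open>hermitian A\<close> by (simp add: hermitian_def)
  qed
next
  assume entries: "\<forall>i<n. \<forall>j<n. A $$ (i, j) = cnj (A $$ (j, i))"
  show "hermitian A" unfolding hermitian_def
  proof (rule eq_matI)
    fix i j assume "i < dim_row A" "j < dim_col A"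
    then have ij: "i < n" "j < n" using A by auto
    then have "A $$ (i, j) = cnj (A $$ (j, i))" using entries by blast
    with A ij show "mat_adjoint A $$ (i, j) = A $$ (i, j)" by simp
  qed (use A in auto)
qed

lemma hermitian_eigenvalue_real:
  assumes A: "A \<in> carrier_mat n n" "hermitian A" and x: "eigenvector A x \<mu>"
  shows "\<mu> = complex_of_real (Re \<mu>)"
proof -
  have xc: "x \<in> carrier_vec n" and x0: "x \<noteq> 0\<^sub>v n" and Ax: "A *\<^sub>v x = \<mu> \<cdot>\<^sub>v x"
    using x A unfolding eigenvector_def by auto
  have "\<mu> * (x \<bullet>c x) = (A *\<^sub>v x) \<bullet>c x" using Ax xc by (simp add: cscalar_prod_smult_left)
  also have "\<dots> = x \<bullet>c (A *\<^sub>v x)" using cscalar_prod_mat_adjoint[OF A(1) xc xc] A(2)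
    by (simp add: hermitian_def)
  also have "\<dots> = cnj \<mu> * (x \<bullet>c x)" using Ax xc by (simp add: cscalar_prod_smult_right)
  finally have "\<mu> = cnj \<mu>" using xc x0 by simp
  then show ?thesis by (simp add: complex_eq_iff)
qed

text \<open>A Hermitian matrix is normal, so if its only eigenvalue is 0 then its Schur form is
  strictly upper triangular and \<open>tr (N N\<^sup>*) = tr (N\<^sup>2) = 0\<close>.\<close>
lemma hermitian_spectrum_zero:
  assumes N: "N \<in> carrier_mat n n" "hermitian N" and ev: "\<And>\<mu>. eigenvalue N \<mu> \<Longrightarrow> \<mu> = 0"
  shows "N = 0\<^sub>m n n"
proof -
  obtain es where cp: "char_poly N = (\<Prod>a\<leftarrow>es. [:- a, 1:])"
    using char_poly_factorized[OF N(1)] by auto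
  obtain B P Q where sd: "schur_decomposition N es = (B, P, Q)"
    by (cases "schur_decomposition N es") auto
  from schur_decomposition[OF N(1) cp sd]
  have sim: "similar_mat_wit N B P Q" and ut: "upper_triangular B" and dg: "diag_mat B = es" by auto
  from sim N have BPQ: "B \<in> carrier_mat n n" "P \<in> carrier_mat n n" "Q \<in> carrier_mat n n"
    and QP: "Q * P = 1\<^sub>m n" and NPBQ: "N = P * B * Q"
    unfolding similar_mat_wit_def Let_def by auto
  have es0: "e = 0" if "e \<in> set es" for e
  proof -
    have "poly (char_poly N) e = 0" unfolding cp poly_prod_list
      using that by (auto simp: prod_list_zero_iff)
    then show ?thesis using ev eigenvalue_root_char_poly[OF N(1)] by simp
  qed
  have B0: "B $$ (i, j) = 0" if "i < n" "j < n" "j \<le> i" for i j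
  proof (cases "j = i")
    case True
    then have "B $$ (i, j) \<in> set es" using dg[symmetric] that BPQ unfolding diag_mat_def by auto
    then show ?thesis using es0 by auto
  next
    case False
    then show ?thesis using ut that BPQ unfolding upper_triangular_def by auto
  qed
  have QPX: "Q * (P * X) = X" if "X \<in> carrier_mat n n" for X
    using that BPQ by (simp add: assoc_mult_mat[symmetric, of Q n n P n X n] QP)
  have NN: "N * N = P * (B * B * Q)"
    unfolding NPBQ using BPQ QPX by (simp add: assoc_mult_mat[of _ n n _ n _ n])
  have "mtrace (N * N) = mtrace (B * B * Q * P)"
    unfolding NN by (rule mtrace_mult_comm) (use BPQ in auto)
  also have "B * B * Q * P = B * B"
    using BPQ QP by (subst assoc_mult_mat[of "B * B" n n Q n P n]) auto
  also have "mtrace (B * B) = 0"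
    using BPQ unfolding mtrace_def
    by (auto simp: index_mult_mat_sum intro!: sum.neutral) (metis B0 linorder_le_cases mult_eq_0_iff)
  finally have "mtrace (N * N) = 0" .
  then show ?thesis using mtrace_mult_mat_adjoint_eq_0[OF N(1)] N(2) by (simp add: hermitian_def)
qed

definition orthonormal :: "nat \<Rightarrow> complex vec list \<Rightarrow> bool" where
  "orthonormal n vs \<longleftrightarrow> set vs \<subseteq> carrier_vec n \<and>
     (\<forall>i<length vs. \<forall>j<length vs. vs ! i \<bullet>c vs ! j = (if i = j then 1 else 0))"

lemma orthonormal_append:
  assumes vs: "orthonormal n vs" and u: "u \<in> carrier_vec n" "u \<bullet>c u = 1"
    and uo: "\<And>j. j < length vs \<Longrightarrow> u \<bullet>c vs ! j = 0"
  shows "orthonormal n (vs @ [u])"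
proof -
  have "vs ! j \<bullet>c u = 0" if j: "j < length vs" for j
  proof -
    have "vs ! j \<in> carrier_vec n" using vs j unfolding orthonormal_def by auto
    then show ?thesis using cscalar_prod_commute[OF u(1)] uo[OF j] by simp
  qed
  with assms show ?thesis unfolding orthonormal_def by (auto simp: nth_append less_Suc_eq)
qed

lemma mat_adjoint_mat_of_cols_mult_vec:
  assumes "set vs \<subseteq> carrier_vec n" "(y :: complex vec) \<in> carrier_vec n"
  shows "mat_adjoint (mat_of_cols n vs) *\<^sub>v y = vec (length vs) (\<lambda>j. y \<bullet>c vs ! j)"
proof (rule eq_vecI)
  fix j assume "j < dim_vec (vec (length vs) (\<lambda>j. y \<bullet>c vs ! j))"
  then have j: "j < length vs" by simp
  then have "vs ! j \<in> carrier_vec n" using assms(1) by auto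
  then show "(mat_adjoint (mat_of_cols n vs) *\<^sub>v y) $ j = vec (length vs) (\<lambda>j. y \<bullet>c vs ! j) $ j"
    using j assms(2) by (simp add: index_mult_mat_vec_sum cscalar_prod_sum mat_of_cols_index mult.commute)
qed simp

lemma orthonormal_mat_of_cols:
  assumes "orthonormal n vs"
  shows "mat_adjoint (mat_of_cols n vs) * mat_of_cols n vs = 1\<^sub>m (length vs)"
proof (rule eq_matI)
  fix i j assume "i < dim_row (1\<^sub>m (length vs) :: complex mat)" "j < dim_col (1\<^sub>m (length vs) :: complex mat)"
  then have ij: "i < length vs" "j < length vs" by auto
  with assms have "vs ! i \<in> carrier_vec n" "vs ! j \<in> carrier_vec n" unfolding orthonormal_def by auto
  with ij have "(mat_adjoint (mat_of_cols n vs) * mat_of_cols n vs) $$ (i, j) = vs ! j \<bullet>c vs ! i"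
    by (simp add: index_mult_mat_sum cscalar_prod_sum mat_of_cols_index mult.commute)
  with assms ij show "(mat_adjoint (mat_of_cols n vs) * mat_of_cols n vs) $$ (i, j)
      = 1\<^sub>m (length vs) $$ (i, j)"
    unfolding orthonormal_def by auto
qed auto

lemma mult_mat_of_cols_eigenvectors:
  assumes A: "A \<in> carrier_mat n n" and vs: "set vs \<subseteq> carrier_vec n"
    and eig: "\<And>i. i < length vs \<Longrightarrow> A *\<^sub>v vs ! i = complex_of_real (lam i) \<cdot>\<^sub>v vs ! i"
  shows "A * mat_of_cols n vs = mat_of_cols n vs * real_diag (length vs) lam"
proof (rule eq_matI)
  fix a i assume "a < dim_row (mat_of_cols n vs * real_diag (length vs) lam)"
    "i < dim_col (mat_of_cols n vs * real_diag (length vs) lam)"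
  then have ai: "a < n" "i < length vs" by auto
  then have vi: "vs ! i \<in> carrier_vec n" using vs by auto
  have "(A * mat_of_cols n vs) $$ (a, i) = (A *\<^sub>v vs ! i) $ a"
    using ai A vi by (simp add: index_mult_mat_sum index_mult_mat_vec_sum mat_of_cols_index)
  also have "\<dots> = complex_of_real (lam i) * vs ! i $ a" using eig ai vi by simp
  also have "\<dots> = (mat_of_cols n vs * real_diag (length vs) lam) $$ (a, i)"
    using ai by (simp add: index_mult_mat_sum mat_of_cols_index if_distrib sum.delta cong: if_cong)
  finally show "(A * mat_of_cols n vs) $$ (a, i)
      = (mat_of_cols n vs * real_diag (length vs) lam) $$ (a, i)" .
qed (use A in auto)

lemma normalize_vec:
  assumes y: "(y :: complex vec) \<in> carrier_vec n" "y \<noteq> 0\<^sub>v n"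
  obtains c where "c \<noteq> 0" "(c \<cdot>\<^sub>v y) \<bullet>c (c \<cdot>\<^sub>v y) = 1"
proof
  define s where "s = Re (y \<bullet>c y)"
  have ys: "y \<bullet>c y = complex_of_real s"
    using cscalar_prod_self_real[OF y(1)] unfolding s_def .
  have "0 < y \<bullet>c y" using y by simp
  then have s: "0 < s" by (simp add: s_def less_complex_def)
  then show "complex_of_real (1 / sqrt s) \<noteq> 0" by simp
  have "1 / sqrt s * (1 / sqrt s * s) = 1" using s by (simp add: field_simps)
  then show "(complex_of_real (1 / sqrt s) \<cdot>\<^sub>v y) \<bullet>c (complex_of_real (1 / sqrt s) \<cdot>\<^sub>v y) = 1"
    using y ys by (simp add: cscalar_prod_smult_left cscalar_prod_smult_right flip: of_real_mult)
qed

lemma mult_mat_vec_unit_vec: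
  assumes "(P :: 'a :: semiring_1 mat) \<in> carrier_mat n m" "a < m"
  shows "P *\<^sub>v unit_vec m a = col P a"
  using assms by (intro eq_vecI) (auto simp: index_mult_mat_vec)

text \<open>If \<open>P A P \<noteq> 0\<close>, an eigenvector for a nonzero eigenvalue lies in the range of \<open>P\<close>;
  if \<open>P A P = 0\<close>, every vector in the range of \<open>P\<close> is an eigenvector.\<close>
lemma hermitian_compression_eigenvector:
  assumes A: "A \<in> carrier_mat n n" "hermitian A" and P: "P \<in> carrier_mat n n" "hermitian P"
    and P0: "P \<noteq> 0\<^sub>m n n"
  obtains x \<mu> where "x \<in> carrier_vec n" "P *\<^sub>v x \<noteq> 0\<^sub>v n"
    "(P * A * P) *\<^sub>v (P *\<^sub>v x) = \<mu> \<cdot>\<^sub>v (P *\<^sub>v x)"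
proof (cases "P * A * P = 0\<^sub>m n n")
  case True
  have "\<exists>a<n. col P a \<noteq> 0\<^sub>v n"
  proof (rule ccontr)
    assume "\<not> (\<exists>a<n. col P a \<noteq> 0\<^sub>v n)"
    then have "P = 0\<^sub>m n n" using P by (intro mat_col_eqI) auto
    with P0 show False ..
  qed
  then obtain a where a: "a < n" "col P a \<noteq> 0\<^sub>v n" by blast
  with P True show ?thesis by (intro that[of "unit_vec n a" 0]) (auto simp: mult_mat_vec_unit_vec)
next
  case False
  have N: "P * A * P \<in> carrier_mat n n" "hermitian (P * A * P)"
    using A P by (auto simp: hermitian_def mat_adjoint_mult assoc_mult_mat[of P n n A n P n])
  then obtain \<mu> w where w: "eigenvector (P * A * P) w \<mu>" and \<mu>: "\<mu> \<noteq> 0"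
    using hermitian_spectrum_zero[OF N] False unfolding eigenvalue_def by blast
  then have wc: "w \<in> carrier_vec n" and w0: "w \<noteq> 0\<^sub>v n" and Nw: "(P * A * P) *\<^sub>v w = \<mu> \<cdot>\<^sub>v w"
    using N unfolding eigenvector_def by auto
  define x where "x = (1 / \<mu>) \<cdot>\<^sub>v (A *\<^sub>v (P *\<^sub>v w))"
  have x: "x \<in> carrier_vec n" unfolding x_def using A P wc by simp
  have "w = (1 / \<mu>) \<cdot>\<^sub>v ((P * A * P) *\<^sub>v w)" using Nw \<mu> wc by (auto simp: smult_smult_assoc)
  then have "w = P *\<^sub>v x" unfolding x_def using P A wc
    by (simp add: assoc_mult_mat_vec[of _ n n _ n] mult_mat_vec[of _ n n])
  with x w0 Nw show ?thesis by (intro that[of x \<mu>]) simp_all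
qed

lemma orth_complement_proj:
  assumes V: "(V :: complex mat) \<in> carrier_mat n k" and VV: "mat_adjoint V * V = 1\<^sub>m k"
  defines "P \<equiv> 1\<^sub>m n - V * mat_adjoint V"
  shows "P \<in> carrier_mat n n" "hermitian P" "mat_adjoint V * P = 0\<^sub>m k n"
    "mtrace P = of_nat n - of_nat k"
    "\<And>y. y \<in> carrier_vec n \<Longrightarrow> mat_adjoint V *\<^sub>v y = 0\<^sub>v k \<Longrightarrow> P *\<^sub>v y = y"
proof -
  show P: "P \<in> carrier_mat n n" unfolding P_def using V by auto
  show "hermitian P" unfolding hermitian_def P_def using V by (simp add: mat_adjoint_minus mat_adjoint_mult)
  have "mat_adjoint V * P = mat_adjoint V * 1\<^sub>m n - mat_adjoint V * (V * mat_adjoint V)"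
    unfolding P_def by (rule mult_minus_distrib_mat) (use V in auto)
  also have "mat_adjoint V * (V * mat_adjoint V) = mat_adjoint V * V * mat_adjoint V"
    by (rule assoc_mult_mat[symmetric]) (use V in auto)
  finally show "mat_adjoint V * P = 0\<^sub>m k n" using V VV by simp
  have "mtrace (V * mat_adjoint V) = mtrace (1\<^sub>m k :: complex mat)"
    using V VV mtrace_mult_comm[of V n k "mat_adjoint V"] by simp
  then show "mtrace P = of_nat n - of_nat k"
    unfolding P_def using V by (subst mtrace_minus[of _ n]) (auto simp: mtrace_def)
  show "P *\<^sub>v y = y" if "y \<in> carrier_vec n" "mat_adjoint V *\<^sub>v y = 0\<^sub>v k" for y
    using that V unfolding P_def
    by (simp add: minus_mult_distrib_mat_vec[of _ n n] assoc_mult_mat_vec[of _ n k _ n])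
qed

text \<open>Apply the previous lemma to the projection \<open>P\<close> onto the orthogonal complement of the
  range of \<open>V\<close>: it is nonzero because its trace is \<open>n - k\<close>, and since \<open>A\<close> maps the range of \<open>V\<close>
  into itself, the compression \<open>P A P\<close> agrees with \<open>A\<close> on the range of \<open>P\<close>.\<close>
lemma hermitian_eigenvector_orth_complement:
  assumes A: "A \<in> carrier_mat n n" "hermitian A" and V: "V \<in> carrier_mat n k"
    and VV: "mat_adjoint V * V = 1\<^sub>m k" and AV: "A * V = V * D" and D: "D \<in> carrier_mat k k"
    and k: "k < n"
  obtains y \<mu> where "eigenvector A y \<mu>" "mat_adjoint V *\<^sub>v y = 0\<^sub>v k"
proof -
  define P where "P = 1\<^sub>m n - V * mat_adjoint V"
  note proj = orth_complement_proj[OF V VV, folded P_def]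
  have "P \<noteq> 0\<^sub>m n n" using proj(4) k by (auto simp: mtrace_def)
  then obtain x \<mu> where x: "x \<in> carrier_vec n" and y0: "P *\<^sub>v x \<noteq> 0\<^sub>v n"
    and Ny: "(P * A * P) *\<^sub>v (P *\<^sub>v x) = \<mu> \<cdot>\<^sub>v (P *\<^sub>v x)"
    using hermitian_compression_eigenvector[OF A proj(1,2)] by blast
  define y where "y = P *\<^sub>v x"
  have yc: "y \<in> carrier_vec n" unfolding y_def using proj(1) x by simp
  have "mat_adjoint V *\<^sub>v y = (mat_adjoint V * P) *\<^sub>v x"
    unfolding y_def by (rule assoc_mult_mat_vec[symmetric]) (use V proj(1) x in auto)
  then have yV: "mat_adjoint V *\<^sub>v y = 0\<^sub>v k" using x by (simp add: proj(3))
  have "mat_adjoint V * A = mat_adjoint (A * V)"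
    using A V by (simp add: mat_adjoint_mult hermitian_def)
  then have VA: "mat_adjoint V * A = mat_adjoint D * mat_adjoint V"
    using AV V D by (simp add: mat_adjoint_mult)
  have "mat_adjoint V *\<^sub>v (A *\<^sub>v y) = (mat_adjoint V * A) *\<^sub>v y"
    by (rule assoc_mult_mat_vec[symmetric]) (use A V yc in auto)
  also have "\<dots> = mat_adjoint D *\<^sub>v (mat_adjoint V *\<^sub>v y)"
    unfolding VA by (rule assoc_mult_mat_vec) (use D V yc in auto)
  finally have AyV: "mat_adjoint V *\<^sub>v (A *\<^sub>v y) = 0\<^sub>v k" using yV D by simp
  have "A *\<^sub>v y = (P * A * P) *\<^sub>v y"
    using A proj(1,5) yc yV AyV by (simp add: assoc_mult_mat_vec[of _ n n _ n])
  then have "A *\<^sub>v y = \<mu> \<cdot>\<^sub>v y" using Ny unfolding y_def by simp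
  with yc y0 yV A show ?thesis by (intro that[of y \<mu>]) (auto simp: eigenvector_def y_def)
qed

lemma hermitian_orthonormal_eigenvectors:
  assumes A: "A \<in> carrier_mat n n" "hermitian A" and k: "k \<le> n"
  shows "\<exists>vs lam. length vs = k \<and> orthonormal n vs \<and>
    (\<forall>i<k. A *\<^sub>v vs ! i = complex_of_real (lam i) \<cdot>\<^sub>v vs ! i)"
  using k
proof (induction k)
  case 0
  show ?case by (intro exI[of _ "[]"]) (simp add: orthonormal_def)
next
  case (Suc k)
  then obtain vs lam where len: "length vs = k" and on: "orthonormal n vs"
    and eig: "\<forall>i<k. A *\<^sub>v vs ! i = complex_of_real (lam i) \<cdot>\<^sub>v vs ! i" by auto
  define V where "V = mat_of_cols n vs"
  have vs: "set vs \<subseteq> carrier_vec n" using on unfolding orthonormal_def by simp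
  have V: "V \<in> carrier_mat n k" unfolding V_def len[symmetric] by simp
  have VV: "mat_adjoint V * V = 1\<^sub>m k"
    unfolding V_def len[symmetric] by (rule orthonormal_mat_of_cols[OF on])
  have AV: "A * V = V * real_diag k lam"
    unfolding V_def len[symmetric] by (rule mult_mat_of_cols_eigenvectors[OF A(1) vs]) (use eig len in auto)
  obtain y \<mu> where y: "eigenvector A y \<mu>" and yV: "mat_adjoint V *\<^sub>v y = 0\<^sub>v k"
    using hermitian_eigenvector_orth_complement[OF A V VV AV real_diag_carrier] Suc(2) by auto
  have yc: "y \<in> carrier_vec n" and y0: "y \<noteq> 0\<^sub>v n" and Ay: "A *\<^sub>v y = \<mu> \<cdot>\<^sub>v y"
    using y A(1) unfolding eigenvector_def by auto
  obtain c where "c \<noteq> 0" and u1: "(c \<cdot>\<^sub>v y) \<bullet>c (c \<cdot>\<^sub>v y) = 1"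
    using normalize_vec[OF yc y0] .
  define u where "u = c \<cdot>\<^sub>v y"
  have uc: "u \<in> carrier_vec n" unfolding u_def using yc by simp
  have uu: "u \<bullet>c u = 1" unfolding u_def by (rule u1)
  have uo: "u \<bullet>c vs ! j = 0" if j: "j < length vs" for j
  proof -
    have vj: "vs ! j \<in> carrier_vec n" using vs j by auto
    have "y \<bullet>c vs ! j = 0"
      using yV j len unfolding V_def mat_adjoint_mat_of_cols_mult_vec[OF vs yc]
      by (metis index_vec index_zero_vec(1))
    then show ?thesis unfolding u_def using yc vj by (simp add: cscalar_prod_smult_left)
  qed
  have Au: "A *\<^sub>v u = complex_of_real (Re \<mu>) \<cdot>\<^sub>v u"
    using hermitian_eigenvalue_real[OF A y] Ay A(1) yc unfolding u_def
    by (simp add: mult_mat_vec smult_smult_assoc mult.commute)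
  show ?case
  proof (intro exI[of _ "vs @ [u]"] exI[of _ "lam(k := Re \<mu>)"] conjI)
    show "length (vs @ [u]) = Suc k" using len by simp
    show "orthonormal n (vs @ [u])" by (rule orthonormal_append[OF on uc uu uo])
    show "\<forall>i<Suc k. A *\<^sub>v (vs @ [u]) ! i = complex_of_real ((lam(k := Re \<mu>)) i) \<cdot>\<^sub>v (vs @ [u]) ! i"
      using eig Au len by (auto simp: nth_append less_Suc_eq)
  qed
qed

theorem hermitian_spectral_decomposition:
  assumes A: "A \<in> carrier_mat n n" "hermitian A"
  obtains U f where "unitary n U" "A = U * real_diag n f * mat_adjoint U"
proof -
  obtain vs lam where len: "length vs = n" and on: "orthonormal n vs"
    and eig: "\<forall>i<n. A *\<^sub>v vs ! i = complex_of_real (lam i) \<cdot>\<^sub>v vs ! i"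
    using hermitian_orthonormal_eigenvectors[OF A order_refl] by blast
  define U where "U = mat_of_cols n vs"
  have U: "U \<in> carrier_mat n n" unfolding U_def using mat_of_cols_carrier[of n vs] len by simp
  have UU: "mat_adjoint U * U = 1\<^sub>m n" unfolding U_def using orthonormal_mat_of_cols[OF on] len by simp
  then have UU': "U * mat_adjoint U = 1\<^sub>m n" using mat_mult_left_right_inverse[OF _ U UU] U by simp
  have AU: "A * U = U * real_diag n lam"
    unfolding U_def using mult_mat_of_cols_eigenvectors[OF A(1), of vs lam] on eig len
    unfolding orthonormal_def by auto
  have "A = A * U * mat_adjoint U" using A U UU' by (simp add: assoc_mult_mat[of A n n U n _ n])
  then have "A = U * real_diag n lam * mat_adjoint U" using AU by simp
  with U UU UU' show ?thesis by (intro that[of U lam]) (simp_all add: unitary_def)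
qed

lemma unitary_conj_mult:
  assumes U: "unitary n U" and B: "B \<in> carrier_mat n n" and C: "C \<in> carrier_mat n n"
  shows "U * B * mat_adjoint U * (U * C * mat_adjoint U) = U * (B * C) * mat_adjoint U"
proof -
  have Uc: "U \<in> carrier_mat n n" and UU: "mat_adjoint U * U = 1\<^sub>m n" using U by (auto simp: unitary_def)
  then have "mat_adjoint U * (U * (C * mat_adjoint U)) = C * mat_adjoint U"
    using C by (simp add: assoc_mult_mat[symmetric, of "mat_adjoint U" n n U n _ n])
  then show ?thesis using Uc B C by (simp add: assoc_mult_mat[of _ n n _ n _ n])
qed

lemma unitary_conj_cancel:
  assumes U: "unitary n U" and B: "B \<in> carrier_mat n n"
  shows "mat_adjoint U * (U * B * mat_adjoint U) * U = B"
proof -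
  have Uc: "U \<in> carrier_mat n n" and UU: "mat_adjoint U * U = 1\<^sub>m n" using U by (auto simp: unitary_def)
  then have "mat_adjoint U * (U * X) = X" if "X \<in> carrier_mat n n" for X
    using that by (simp add: assoc_mult_mat[symmetric, of "mat_adjoint U" n n U n X n])
  then show ?thesis using Uc UU B by (simp add: assoc_mult_mat[of _ n n _ n _ n])
qed

section \<open>Positive semidefinite matrices and their square roots\<close>

text \<open>In the ordering of the complex numbers used by the matrix library,
  \<open>0 \<le> z\<close> means that \<open>z\<close> is real and nonnegative.\<close>
lemma psd_iff:
  "psd n A \<longleftrightarrow> A \<in> carrier_mat n n \<and> hermitian A \<and> (\<forall>v \<in> carrier_vec n. 0 \<le> (A *\<^sub>v v) \<bullet>c v)"
proof -
  have "z \<in> \<real> \<and> 0 \<le> Re z \<longleftrightarrow> 0 \<le> z" for z :: complex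
    by (auto simp: less_eq_complex_def complex_is_Real_iff)
  then show ?thesis unfolding psd_def using hermitian_iff_index by blast
qed

lemma psd_carrier: "psd n A \<Longrightarrow> A \<in> carrier_mat n n"
  by (simp add: psd_iff)

lemma psd_mat_adjoint: "psd n A \<Longrightarrow> mat_adjoint A = A"
  by (simp add: psd_iff hermitian_def)

lemma psd_form_nonneg: "psd n A \<Longrightarrow> v \<in> carrier_vec n \<Longrightarrow> 0 \<le> (A *\<^sub>v v) \<bullet>c v"
  by (simp add: psd_iff)

lemma psd_congruence:
  assumes D: "psd m D" and V: "V \<in> carrier_mat n m"
  shows "psd n (V * D * mat_adjoint V)"
  unfolding psd_iff
proof (intro conjI ballI)
  have Dc: "D \<in> carrier_mat m m" and hD: "mat_adjoint D = D" using D by (auto simp: psd_iff hermitian_def)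
  show "V * D * mat_adjoint V \<in> carrier_mat n n" using Dc V by auto
  show "hermitian (V * D * mat_adjoint V)"
    unfolding hermitian_def using Dc V hD by (simp add: mat_adjoint_mult assoc_mult_mat[of V n m D m _ n])
  fix v :: "complex vec" assume v: "v \<in> carrier_vec n"
  have w: "mat_adjoint V *\<^sub>v v \<in> carrier_vec m" by (rule mult_mat_vec_carrier[of _ m n]) (use V v in auto)
  have "(V * D * mat_adjoint V *\<^sub>v v) \<bullet>c v = (V *\<^sub>v (D *\<^sub>v (mat_adjoint V *\<^sub>v v))) \<bullet>c v"
    using Dc V v w by (simp add: assoc_mult_mat_vec[of _ n m _ n] assoc_mult_mat_vec[of _ n m _ m])
  also have "\<dots> = (D *\<^sub>v (mat_adjoint V *\<^sub>v v)) \<bullet>c (mat_adjoint V *\<^sub>v v)"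
    by (rule cscalar_prod_mat_adjoint[OF V _ v]) (use Dc w in auto)
  finally show "0 \<le> (V * D * mat_adjoint V *\<^sub>v v) \<bullet>c v" using psd_form_nonneg[OF D w] by simp
qed

lemma psd_real_diag:
  assumes "\<And>i. i < n \<Longrightarrow> 0 \<le> f i"
  shows "psd n (real_diag n f)"
  unfolding psd_iff
proof (intro conjI ballI real_diag_carrier hermitian_real_diag)
  fix v :: "complex vec" assume v: "v \<in> carrier_vec n"
  have "(real_diag n f *\<^sub>v v) \<bullet>c v = (\<Sum>i<n. complex_of_real (f i * (cmod (v $ i))\<^sup>2))"
    using v by (simp add: cscalar_prod_sum index_mult_mat_vec_sum if_distrib[of "\<lambda>x. x * v $ _"]
        complex_norm_square mult.assoc cong: if_cong del: of_real_power)
  also have "\<dots> = complex_of_real (\<Sum>i<n. f i * (cmod (v $ i))\<^sup>2)" by simp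
  finally have eq: "(real_diag n f *\<^sub>v v) \<bullet>c v = complex_of_real (\<Sum>i<n. f i * (cmod (v $ i))\<^sup>2)" .
  have "0 \<le> (\<Sum>i<n. f i * (cmod (v $ i))\<^sup>2)" using assms by (auto intro!: sum_nonneg)
  then show "0 \<le> (real_diag n f *\<^sub>v v) \<bullet>c v"
    unfolding eq by (simp add: less_eq_complex_def del: of_real_sum)
qed

lemma psd_mult_mat_adjoint: "A \<in> carrier_mat n m \<Longrightarrow> psd n (A * mat_adjoint A)"
  using psd_congruence[OF psd_real_diag[of m "\<lambda>_. 1"]] by (simp add: real_diag_one)

lemma psd_diag_nonneg:
  assumes M: "psd n M" and i: "i < n"
  shows "0 \<le> M $$ (i, i)"
proof -
  have M': "M \<in> carrier_mat n n" using psd_carrier[OF M] .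
  have "conjugate (unit_vec n i) = (unit_vec n i :: complex vec)" by (intro eq_vecI) (auto simp: unit_vec_def)
  then have "(M *\<^sub>v unit_vec n i) \<bullet>c unit_vec n i = M $$ (i, i)"
    using M' i by (simp add: index_mult_mat_vec scalar_prod_right_unit)
  then show ?thesis using psd_form_nonneg[OF M unit_vec_carrier[of n i]] by simp
qed

lemma psd_mtrace_nonneg: "psd n M \<Longrightarrow> 0 \<le> Re (mtrace M)"
  using psd_diag_nonneg[of n M] psd_carrier[of n M]
  by (auto simp: mtrace_def less_eq_complex_def intro!: sum_nonneg)

lemma psd_spectral_decomposition:
  assumes A: "psd n A"
  obtains U f where "unitary n U" "\<And>i. i < n \<Longrightarrow> 0 \<le> f i" "A = U * real_diag n f * mat_adjoint U"
proof -
  obtain U f where U: "unitary n U" and Af: "A = U * real_diag n f * mat_adjoint U"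
    using hermitian_spectral_decomposition[of A n] A by (auto simp: psd_iff)
  have "psd n (mat_adjoint U * A * mat_adjoint (mat_adjoint U))"
    by (rule psd_congruence[OF A]) (use U in \<open>auto simp: unitary_def\<close>)
  then have "psd n (real_diag n f)" using unitary_conj_cancel[OF U real_diag_carrier] Af by simp
  then have "0 \<le> f i" if "i < n" for i
    using psd_diag_nonneg[OF \<open>psd n (real_diag n f)\<close> that] that by (simp add: less_eq_complex_def)
  with U Af show ?thesis using that by blast
qed

lemma psd_sqrt_exists:
  assumes A: "psd n A"
  obtains B where "psd n B" "B * B = A"
proof -
  obtain U f where U: "unitary n U" and f: "\<And>i. i < n \<Longrightarrow> 0 \<le> f i"
    and Af: "A = U * real_diag n f * mat_adjoint U"
    using psd_spectral_decomposition[OF A] by blast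
  define B where "B = U * real_diag n (\<lambda>i. sqrt (f i)) * mat_adjoint U"
  have "psd n B" unfolding B_def
    by (rule psd_congruence[OF psd_real_diag]) (use U f in \<open>auto simp: unitary_def\<close>)
  moreover have "B * B = A" unfolding B_def Af
    using f by (simp add: unitary_conj_mult[OF U] real_diag_mult real_diag_cong[of n "\<lambda>i. \<bar>f i\<bar>" f])
  ultimately show ?thesis by (rule that)
qed

lemma psd_form_eq_0:
  assumes B: "psd n B" and x: "x \<in> carrier_vec n" and z: "(B *\<^sub>v x) \<bullet>c x = 0"
  shows "B *\<^sub>v x = 0\<^sub>v n"
proof -
  obtain K where K: "psd n K" and KK: "K * K = B" using psd_sqrt_exists[OF B] .
  have Kc: "K \<in> carrier_mat n n" using psd_carrier[OF K] .
  have Kx: "K *\<^sub>v x \<in> carrier_vec n" using Kc x by simp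
  have "(B *\<^sub>v x) \<bullet>c x = (K *\<^sub>v (K *\<^sub>v x)) \<bullet>c x"
    using Kc x by (simp add: KK[symmetric] assoc_mult_mat_vec[of _ n n _ n])
  also have "\<dots> = (K *\<^sub>v x) \<bullet>c (K *\<^sub>v x)"
    using cscalar_prod_mat_adjoint[OF Kc Kx x] psd_mat_adjoint[OF K] by simp
  finally have "K *\<^sub>v x = 0\<^sub>v n" using Kx z by simp
  then show ?thesis using Kc x by (simp add: KK[symmetric] assoc_mult_mat_vec[of _ n n _ n])
qed

text \<open>If \<open>B\<^sup>2 = C\<^sup>2\<close> and \<open>(B - C) x = \<mu> x\<close>, then with \<open>b = B x\<close>, \<open>c = C x\<close> one gets
  \<open>\<mu> (\<langle>x, b\<rangle> + \<langle>x, c\<rangle>) = \<langle>b, c\<rangle> - \<langle>c, b\<rangle>\<close>, which is purely imaginary; as both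
  \<open>\<langle>x, b\<rangle>\<close> and \<open>\<langle>x, c\<rangle>\<close> are nonnegative, \<open>\<mu> \<noteq> 0\<close> forces \<open>B x = C x = 0\<close>.\<close>
lemma psd_same_square_diff_eigenvalue:
  assumes B: "psd n B" and C: "psd n C" and BC: "B * B = C * C"
    and x: "eigenvector (B - C) x \<mu>"
  shows "\<mu> = 0"
proof (rule ccontr)
  assume \<mu>: "\<mu> \<noteq> 0"
  have Bc: "B \<in> carrier_mat n n" "mat_adjoint B = B" and Cc: "C \<in> carrier_mat n n" "mat_adjoint C = C"
    using B C by (auto simp: psd_iff hermitian_def)
  have H: "B - C \<in> carrier_mat n n" "hermitian (B - C)"
    using Bc Cc by (auto simp: hermitian_def mat_adjoint_minus)
  have xc: "x \<in> carrier_vec n" and x0: "x \<noteq> 0\<^sub>v n" and Hx: "(B - C) *\<^sub>v x = \<mu> \<cdot>\<^sub>v x"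
    using x H unfolding eigenvector_def by auto
  define b c where "b = B *\<^sub>v x" and "c = C *\<^sub>v x"
  have bc: "b \<in> carrier_vec n" "c \<in> carrier_vec n" unfolding b_def c_def using Bc Cc xc by auto
  have diff: "\<mu> \<cdot>\<^sub>v x = b - c" using Hx Bc Cc xc unfolding b_def c_def by (simp add: minus_mult_distrib_mat_vec)
  have form: "x \<bullet>c (M *\<^sub>v x) = (M *\<^sub>v x) \<bullet>c x" "0 \<le> (M *\<^sub>v x) \<bullet>c x" if "psd n M" for M
    using cscalar_prod_commute[of "M *\<^sub>v x" n x] psd_form_nonneg[OF that xc] psd_carrier[OF that] xc
    by (auto simp: less_eq_complex_def complex_eq_iff)
  have "b \<bullet>c b = x \<bullet>c ((B * B) *\<^sub>v x)"
    using cscalar_prod_mat_adjoint[OF Bc(1) xc bc(1)] Bc xc unfolding b_def by simp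
  also have "\<dots> = c \<bullet>c c"
    using cscalar_prod_mat_adjoint[OF Cc(1) xc bc(2)] Cc xc unfolding BC c_def by simp
  finally have bb: "b \<bullet>c b = c \<bullet>c c" .
  have "\<mu> * (x \<bullet>c b + x \<bullet>c c) = (b - c) \<bullet>c b + (b - c) \<bullet>c c"
    using xc bc by (simp add: diff[symmetric] cscalar_prod_smult_left distrib_left)
  also have "\<dots> = b \<bullet>c c - cnj (b \<bullet>c c)"
    using bc bb cscalar_prod_commute[OF bc] by (simp add: cscalar_prod_minus_left)
  finally have "Re (\<mu> * (x \<bullet>c b + x \<bullet>c c)) = 0" by simp
  then have "Re \<mu> * (Re (x \<bullet>c b) + Re (x \<bullet>c c)) = 0"
    by (subst (asm) hermitian_eigenvalue_real[OF H x]) simp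
  moreover have "Re \<mu> \<noteq> 0" using \<mu> hermitian_eigenvalue_real[OF H x] by (metis of_real_0)
  moreover have "0 \<le> x \<bullet>c b" "0 \<le> x \<bullet>c c" using form B C unfolding b_def c_def by auto
  ultimately have "x \<bullet>c b = 0" "x \<bullet>c c = 0" by (auto simp: less_eq_complex_def complex_eq_iff)
  then have "b = 0\<^sub>v n" "c = 0\<^sub>v n"
    using form psd_form_eq_0[OF B xc] psd_form_eq_0[OF C xc] B C unfolding b_def c_def by auto
  then have "\<mu> \<cdot>\<^sub>v x = 0\<^sub>v n" using diff by simp
  have "x $ i = 0" if i: "i < n" for i
  proof -
    have "\<mu> * x $ i = (\<mu> \<cdot>\<^sub>v x) $ i" using i xc by simp
    also have "\<dots> = 0" using \<open>\<mu> \<cdot>\<^sub>v x = 0\<^sub>v n\<close> i by simp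
    finally show ?thesis using \<mu> by simp
  qed
  then have "x = 0\<^sub>v n" using xc by (intro eq_vecI) auto
  with x0 show False ..
qed

lemma psd_sqrt_unique:
  assumes B: "psd n B" and C: "psd n C" and BC: "B * B = C * C"
  shows "B = C"
proof -
  have Bc: "B \<in> carrier_mat n n" "mat_adjoint B = B" and Cc: "C \<in> carrier_mat n n" "mat_adjoint C = C"
    using B C by (auto simp: psd_iff hermitian_def)
  have BC0: "B - C = 0\<^sub>m n n"
  proof (rule hermitian_spectrum_zero)
    show "B - C \<in> carrier_mat n n" "hermitian (B - C)"
      using Bc Cc by (auto simp: hermitian_def mat_adjoint_minus)
    show "\<mu> = 0" if "eigenvalue (B - C) \<mu>" for \<mu>
      using psd_same_square_diff_eigenvalue[OF B C BC] that unfolding eigenvalue_def by blast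
  qed
  show ?thesis
  proof (rule eq_matI)
    fix i j assume ij: "i < dim_row C" "j < dim_col C"
    then have "(B - C) $$ (i, j) = 0" using BC0 Cc by simp
    then show "B $$ (i, j) = C $$ (i, j)" using ij Bc Cc by simp
  qed (use Bc Cc in auto)
qed

lemma psd_msqrt:
  assumes "psd n A"
  shows "psd n (msqrt n A)" and "msqrt n A * msqrt n A = A"
proof -
  obtain B where "psd n B" "B * B = A" using psd_sqrt_exists[OF assms] .
  then have "\<exists>!B. psd n B \<and> B * B = A" using psd_sqrt_unique by blast
  then have "psd n (msqrt n A) \<and> msqrt n A * msqrt n A = A" unfolding msqrt_def by (rule theI')
  then show "psd n (msqrt n A)" "msqrt n A * msqrt n A = A" by auto
qed

section \<open>An upper bound by the fidelity\<close>

lemma mtrace_cross_le: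
  assumes S: "psd n S" and A: "A \<in> carrier_mat n m" and B: "B \<in> carrier_mat n m"
  shows "2 * Re (mtrace (mat_adjoint A * S * B))
    \<le> Re (mtrace (mat_adjoint A * S * A)) + Re (mtrace (mat_adjoint B * S * B))"
proof -
  have Sc: "S \<in> carrier_mat n n" and hS: "mat_adjoint S = S" using S by (auto simp: psd_iff hermitian_def)
  have aA: "mat_adjoint A \<in> carrier_mat m n" and aB: "mat_adjoint B \<in> carrier_mat m n" using A B by auto
  have XS: "mat_adjoint A * S \<in> carrier_mat m n" "mat_adjoint B * S \<in> carrier_mat m n" using aA aB Sc by auto
  have C: "mat_adjoint A * S * A \<in> carrier_mat m m" "mat_adjoint A * S * B \<in> carrier_mat m m"
    "mat_adjoint B * S * B \<in> carrier_mat m m" using XS A B by auto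
  have "psd m (mat_adjoint (A - B) * S * mat_adjoint (mat_adjoint (A - B)))"
    by (rule psd_congruence[OF S]) (use A B in auto)
  then have psd_diff: "psd m (mat_adjoint (A - B) * S * (A - B))" by simp
  have "mat_adjoint (A - B) * S = mat_adjoint A * S - mat_adjoint B * S"
    using A B by (simp add: mat_adjoint_minus)
      (rule minus_mult_distrib_mat[of _ m n _ _ n], use aA aB Sc in auto)
  then have "mat_adjoint (A - B) * S * (A - B) = (mat_adjoint A * S - mat_adjoint B * S) * (A - B)"
    by simp
  also have "\<dots> = mat_adjoint A * S * (A - B) - mat_adjoint B * S * (A - B)"
    by (rule minus_mult_distrib_mat[OF XS minus_carrier_mat[OF B]])
  also have "mat_adjoint A * S * (A - B) = mat_adjoint A * S * A - mat_adjoint A * S * B"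
    by (rule mult_minus_distrib_mat[OF XS(1) A B])
  also have "mat_adjoint B * S * (A - B) = mat_adjoint B * S * A - mat_adjoint B * S * B"
    by (rule mult_minus_distrib_mat[OF XS(2) A B])
  finally have expand: "mat_adjoint (A - B) * S * (A - B) = (mat_adjoint A * S * A - mat_adjoint A * S * B)
      - (mat_adjoint B * S * A - mat_adjoint B * S * B)" .
  have "mat_adjoint (mat_adjoint A * S * B) = mat_adjoint B * mat_adjoint (mat_adjoint A * S)"
    using aA Sc B by (intro mat_adjoint_mult) auto
  also have "mat_adjoint (mat_adjoint A * S) = S * A" using aA Sc hS by (subst mat_adjoint_mult) auto
  finally have "mat_adjoint B * S * A = mat_adjoint (mat_adjoint A * S * B)"
    using aB Sc A by (simp add: assoc_mult_mat[of _ m n _ n _ m])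
  with expand C have "mtrace (mat_adjoint (A - B) * S * (A - B)) = mtrace (mat_adjoint A * S * A)
      - mtrace (mat_adjoint A * S * B) - cnj (mtrace (mat_adjoint A * S * B))
      + mtrace (mat_adjoint B * S * B)"
    by (simp add: mtrace_minus[of _ m] mtrace_mat_adjoint[of _ m] minus_carrier_mat)
  with psd_mtrace_nonneg[OF psd_diff] show ?thesis by simp
qed

text \<open>Only the diagonal of \<open>U\<^sup>* S U\<close> enters, and \<open>tr (U\<^sup>* S U) = tr S\<close>.\<close>
lemma mtrace_contraction_le:
  assumes S: "psd n S" and T: "T \<in> carrier_mat n m" and U: "unitary n U"
    and TT: "T * mat_adjoint T = U * real_diag n g * mat_adjoint U" and g: "\<And>i. i < n \<Longrightarrow> g i \<le> 1"
  shows "Re (mtrace (mat_adjoint T * S * T)) \<le> Re (mtrace S)"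
proof -
  have Sc: "S \<in> carrier_mat n n" using psd_carrier[OF S] .
  have Uc: "U \<in> carrier_mat n n" and UU: "U * mat_adjoint U = 1\<^sub>m n" using U by (auto simp: unitary_def)
  define G where "G = mat_adjoint U * S * U"
  have Gc: "G \<in> carrier_mat n n" unfolding G_def using Sc Uc by auto
  have pG: "psd n G" using psd_congruence[OF S, of "mat_adjoint U"] Uc unfolding G_def by simp
  have TS: "mat_adjoint T * S \<in> carrier_mat m n" using T Sc by auto
  have "mtrace (mat_adjoint T * S * T) = mtrace (T * mat_adjoint T * S)"
    using T Sc TS mtrace_mult_comm[of "mat_adjoint T * S" m n T]
    by (simp add: assoc_mult_mat[of T n m _ n S n])
  also have "\<dots> = mtrace (U * (real_diag n g * mat_adjoint U * S))"
    unfolding TT using Uc Sc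
    by (simp add: assoc_mult_mat[of _ n n _ n _ n] mult_carrier_mat_dim
        carrier_matD[OF Uc] carrier_matD[OF Sc])
  also have "\<dots> = mtrace (real_diag n g * mat_adjoint U * S * U)"
    by (rule mtrace_mult_comm[of _ n n]) (use Uc Sc in auto)
  also have "\<dots> = mtrace (real_diag n g * G)"
    unfolding G_def using Uc Sc
    by (simp add: assoc_mult_mat[of _ n n _ n _ n] mult_carrier_mat_dim
        carrier_matD[OF Uc] carrier_matD[OF Sc])
  also have "\<dots> = (\<Sum>i<n. complex_of_real (g i) * G $$ (i, i))"
    using Gc by (simp add: mtrace_def index_real_diag_mult)
  finally have "Re (mtrace (mat_adjoint T * S * T)) = (\<Sum>i<n. g i * Re (G $$ (i, i)))" by simp
  also have "\<dots> \<le> (\<Sum>i<n. Re (G $$ (i, i)))"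
  proof (rule sum_mono)
    fix i assume "i \<in> {..<n}"
    then show "g i * Re (G $$ (i, i)) \<le> Re (G $$ (i, i))"
      using mult_right_mono[OF g, of i "Re (G $$ (i, i))"] psd_diag_nonneg[OF pG, of i]
      by (simp add: less_eq_complex_def)
  qed
  also have "\<dots> = Re (mtrace G)" using Gc by (simp add: mtrace_def)
  also have "mtrace G = mtrace (S * U * mat_adjoint U)"
    unfolding G_def using Uc Sc mtrace_mult_comm[of "mat_adjoint U" n n "S * U"]
    by (simp add: assoc_mult_mat[of "mat_adjoint U" n n S n U n] mult_carrier_mat_dim carrier_matD[OF Sc])
  also have "S * U * mat_adjoint U = S" using Uc Sc UU by (simp add: assoc_mult_mat[of S n n U n _ n])
  finally show ?thesis .
qed

lemma real_diag_support_mult: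
  assumes Y: "Y \<in> carrier_mat n m" and YY: "Y * mat_adjoint Y = real_diag n f"
  shows "real_diag n (\<lambda>i. if f i = 0 then 0 else 1) * Y = Y"
proof (rule eq_matI)
  fix i j assume "i < dim_row Y" "j < dim_col Y"
  then have ij: "i < n" "j < m" using Y by auto
  have "Y $$ (i, j) = 0" if "f i = 0"
  proof -
    have "complex_of_real (\<Sum>k<m. (cmod (Y $$ (i, k)))\<^sup>2) = (Y * mat_adjoint Y) $$ (i, i)"
      using ij Y by (simp add: index_mult_mat_sum complex_norm_square del: of_real_power)
    also have "\<dots> = 0" using YY ij that by simp
    finally have "(\<Sum>k<m. (cmod (Y $$ (i, k)))\<^sup>2) = 0" by (simp only: of_real_eq_0_iff)
    then show ?thesis using ij by (simp add: sum_nonneg_eq_0_iff)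
  qed
  then show "(real_diag n (\<lambda>i. if f i = 0 then 0 else 1) * Y) $$ (i, j) = Y $$ (i, j)"
    using ij Y by (simp add: index_real_diag_mult)
qed (use Y in auto)

lemma mat_adjoint_unitary_conj_real_diag:
  assumes U: "unitary n U"
  shows "mat_adjoint (U * real_diag n f * mat_adjoint U) = U * real_diag n f * mat_adjoint U"
proof -
  have Uc: "U \<in> carrier_mat n n" using U by (simp add: unitary_def)
  have "mat_adjoint (U * real_diag n f * mat_adjoint U) = U * mat_adjoint (U * real_diag n f)"
    using Uc by (subst mat_adjoint_mult) auto
  also have "mat_adjoint (U * real_diag n f) = real_diag n f * mat_adjoint U"
    using Uc hermitian_real_diag[of n f] by (subst mat_adjoint_mult) (auto simp: hermitian_def)
  finally show ?thesis using Uc by (simp add: assoc_mult_mat[of U n n _ n _ n])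
qed

text \<open>A polar-type decomposition: with \<open>R = U diag(f) U\<^sup>*\<close> take \<open>T = U diag(f)\<^sup>+ U\<^sup>* X\<close>.
  Then \<open>R T = X\<close> because the rows of \<open>U\<^sup>* X\<close> vanish where \<open>f\<close> does, and \<open>T T\<^sup>*\<close> is the
  projection onto the support of \<open>R\<close>.\<close>
lemma psd_root_factor:
  assumes R: "psd n R" and X: "X \<in> carrier_mat n m" and XX: "X * mat_adjoint X = R * R"
  obtains T where "T \<in> carrier_mat n m" "X = R * T"
    "\<And>S. psd n S \<Longrightarrow> Re (mtrace (mat_adjoint T * S * T)) \<le> Re (mtrace S)"
proof -
  obtain U f where U: "unitary n U" and Rf: "R = U * real_diag n f * mat_adjoint U"
    using psd_spectral_decomposition[OF R] by blast
  have Uc: "U \<in> carrier_mat n n" and UU': "U * mat_adjoint U = 1\<^sub>m n" using U by (auto simp: unitary_def)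
  define e :: "nat \<Rightarrow> real" where "e i = (if f i = 0 then 0 else 1)" for i
  define fp :: "nat \<Rightarrow> real" where "fp i = (if f i = 0 then 0 else 1 / f i)" for i
  have fe: "f i * fp i = e i" "fp i * (f i * f i) * fp i = e i" for i
    unfolding e_def fp_def by simp_all
  define P where "P = U * real_diag n fp * mat_adjoint U"
  define Y where "Y = mat_adjoint U * X"
  have Pc: "P \<in> carrier_mat n n" and Yc: "Y \<in> carrier_mat n m" unfolding P_def Y_def using Uc X by auto
  have conj: "\<And>g. U * real_diag n g * mat_adjoint U \<in> carrier_mat n n" using Uc by auto
  note dims = mult_carrier_mat_dim carrier_matD[OF Uc] carrier_matD[OF X] carrier_matD[OF Pc]
  have RR: "R * R = U * real_diag n (\<lambda>i. f i * f i) * mat_adjoint U"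
    unfolding Rf by (simp add: unitary_conj_mult[OF U] real_diag_mult)
  have "Y * mat_adjoint Y = mat_adjoint U * (X * mat_adjoint X) * U"
    unfolding Y_def using Uc X
    by (simp add: mat_adjoint_mult assoc_mult_mat[of _ n n _ n _ n] assoc_mult_mat[of _ n n _ m _ n]
        assoc_mult_mat[of _ n m _ n _ n] dims)
  also have "\<dots> = real_diag n (\<lambda>i. f i * f i)" unfolding XX RR by (rule unitary_conj_cancel[OF U]) simp
  finally have "real_diag n (\<lambda>i. if f i * f i = 0 then 0 else 1) * Y = Y"
    by (rule real_diag_support_mult[OF Yc])
  then have EY: "real_diag n e * Y = Y" unfolding e_def by simp
  have RP: "R * P = U * real_diag n e * mat_adjoint U"
    unfolding Rf P_def by (simp add: unitary_conj_mult[OF U] real_diag_mult fe)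
  have "R * (P * X) = R * P * X" using psd_carrier[OF R] Pc X by (simp add: assoc_mult_mat[of R n n P n X m])
  also have "\<dots> = U * (real_diag n e * Y)"
    unfolding RP Y_def using Uc X by (simp add: assoc_mult_mat[of _ n n _ n _ m] dims)
  also have "\<dots> = X" unfolding EY unfolding Y_def using Uc X UU'
    by (simp add: assoc_mult_mat[symmetric, of U n n _ n X m] dims)
  finally have RPX: "X = R * (P * X)" ..
  have "P * X * mat_adjoint (P * X) = P * (X * mat_adjoint X) * P"
    using Pc X mat_adjoint_unitary_conj_real_diag[OF U] unfolding P_def
    by (simp add: mat_adjoint_mult assoc_mult_mat[of _ n n _ n _ n] assoc_mult_mat[of _ n n _ m _ n]
        assoc_mult_mat[of _ n m _ n _ n] dims)
  also have "\<dots> = U * real_diag n e * mat_adjoint U"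
    unfolding XX RR P_def by (simp add: unitary_conj_mult[OF U] real_diag_mult fe)
  finally have "P * X * mat_adjoint (P * X) = U * real_diag n e * mat_adjoint U" .
  with Pc X U show ?thesis
    by (intro that[OF _ RPX] mtrace_contraction_le) (auto simp: e_def)
qed

lemma Re_mtrace_le_fidelity:
  assumes X: "X \<in> carrier_mat n m" and Y: "Y \<in> carrier_mat n m"
  shows "Re (mtrace (mat_adjoint Y * X)) \<le> fidelity n (X * mat_adjoint X) (Y * mat_adjoint Y)"
proof -
  define R where "R = msqrt n (X * mat_adjoint X)"
  have pR: "psd n R" and RR: "R * R = X * mat_adjoint X"
    unfolding R_def using psd_msqrt[OF psd_mult_mat_adjoint[OF X]] by auto
  have Rc: "R \<in> carrier_mat n n" and hR: "mat_adjoint R = R" using pR by (auto simp: psd_iff hermitian_def)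
  obtain T where Tc: "T \<in> carrier_mat n m" and XRT: "X = R * T"
    and T: "\<And>S. psd n S \<Longrightarrow> Re (mtrace (mat_adjoint T * S * T)) \<le> Re (mtrace S)"
    using psd_root_factor[OF pR X RR[symmetric]] by blast
  note dims = mult_carrier_mat_dim carrier_matD[OF Rc] carrier_matD[OF Y] carrier_matD[OF Tc]
  define Z where "Z = R * Y"
  have Zc: "Z \<in> carrier_mat n m" unfolding Z_def using Rc Y by auto
  have aZ: "mat_adjoint Z = mat_adjoint Y * R" unfolding Z_def using Rc Y hR by (simp add: mat_adjoint_mult)
  have ZZ: "Z * mat_adjoint Z = R * (Y * mat_adjoint Y) * R"
    unfolding aZ unfolding Z_def using Rc Y
    by (simp add: assoc_mult_mat[of _ n n _ m _ n] assoc_mult_mat[of _ n m _ n _ n]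
        assoc_mult_mat[of _ n n _ n _ n] dims)
  define S where "S = msqrt n (R * (Y * mat_adjoint Y) * R)"
  have pS: "psd n S" and SS: "S * S = Z * mat_adjoint Z"
    unfolding S_def ZZ[symmetric] using psd_msqrt[OF psd_mult_mat_adjoint[OF Zc]] by auto
  have Sc: "S \<in> carrier_mat n n" and hS: "mat_adjoint S = S" using pS by (auto simp: psd_iff hermitian_def)
  obtain W where Wc: "W \<in> carrier_mat n m" and ZSW: "Z = S * W"
    and W: "\<And>S'. psd n S' \<Longrightarrow> Re (mtrace (mat_adjoint W * S' * W)) \<le> Re (mtrace S')"
    using psd_root_factor[OF pS Zc SS[symmetric]] by blast
  have "mat_adjoint Y * X = mat_adjoint Z * T"
    unfolding XRT aZ using Rc Y Tc by (simp add: assoc_mult_mat[of _ m n _ n _ m] dims)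
  also have "mat_adjoint Z = mat_adjoint W * S" unfolding ZSW using Sc Wc hS by (simp add: mat_adjoint_mult)
  finally have "2 * Re (mtrace (mat_adjoint Y * X))
      \<le> Re (mtrace (mat_adjoint W * S * W)) + Re (mtrace (mat_adjoint T * S * T))"
    using mtrace_cross_le[OF pS Wc Tc] by simp
  also have "\<dots> \<le> 2 * Re (mtrace S)" using W[OF pS] T[OF pS] by simp
  finally show ?thesis unfolding fidelity_def S_def R_def by simp
qed

section \<open>The swap test\<close>

lemma sum_lessThan_mult:
  fixes f :: "nat \<Rightarrow> 'a::comm_monoid_add"
  shows "(\<Sum>r<d * e. f r) = (\<Sum>a<d. \<Sum>b<e. f (a * e + b))"
proof -
  have "(\<Sum>r<d * e. f r) = (\<Sum>a<d. sum f {a * e..<a * e + e})"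
    by (rule sum.nat_group[symmetric])
  also have "\<dots> = (\<Sum>a<d. \<Sum>b<e. f (a * e + b))"
    by (rule sum.cong[OF refl]) (simp add: sum.shift_bounds_nat_ivl[of f 0 "_ * e" e, simplified]
        atLeast0LessThan add.commute)
  finally show ?thesis .
qed

lemma sum_div_mod:
  fixes g :: "nat \<Rightarrow> nat \<Rightarrow> 'a::comm_monoid_add"
  shows "(\<Sum>c<D * d. g (c div d) (c mod d)) = (\<Sum>k<D. \<Sum>l<d. g k l)"
  unfolding sum_lessThan_mult by (intro sum.cong refl) simp

lemma pair_index_less:
  assumes "i < d" "l < d"
  shows "i * d + l < d * (d :: nat)"
proof -
  have "i * d + l < Suc i * d" using assms(2) by simp
  also have "\<dots> \<le> d * d" using assms(1) by (intro mult_le_mono1) simp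
  finally show ?thesis .
qed

text \<open>Column \<open>k\<close> of \<open>M\<close> is a vector in \<open>\<A> \<otimes> \<B>\<close>; reshaped into a \<open>d \<times> d\<close> matrix with rows
  indexed by \<open>\<A>\<close> (resp. \<open>\<B>\<close>), these blocks are placed side by side.\<close>
definition reshape_A :: "nat \<Rightarrow> complex mat \<Rightarrow> complex mat" where
  "reshape_A d M = mat d (dim_col M * d) (\<lambda>(i, c). M $$ (i * d + c mod d, c div d))"

definition reshape_B :: "nat \<Rightarrow> complex mat \<Rightarrow> complex mat" where
  "reshape_B d M = mat d (dim_col M * d) (\<lambda>(i, c). M $$ ((c mod d) * d + i, c div d))"

lemma reshape_carrier:
  "M \<in> carrier_mat k m \<Longrightarrow> reshape_A d M \<in> carrier_mat d (m * d)"
  "M \<in> carrier_mat k m \<Longrightarrow> reshape_B d M \<in> carrier_mat d (m * d)"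
  by (auto simp: reshape_A_def reshape_B_def)

lemma reshape_A_mult_adjoint:
  assumes M: "M \<in> carrier_mat (d * d) m"
  shows "reshape_A d M * mat_adjoint (reshape_A d M) = ptrace_B d (M * mat_adjoint M)"
proof (rule eq_matI)
  fix i j assume "i < dim_row (ptrace_B d (M * mat_adjoint M))"
    "j < dim_col (ptrace_B d (M * mat_adjoint M))"
  then have ij: "i < d" "j < d" by (auto simp: ptrace_B_def)
  have "(reshape_A d M * mat_adjoint (reshape_A d M)) $$ (i, j)
      = (\<Sum>c<m * d. M $$ (i * d + c mod d, c div d) * cnj (M $$ (j * d + c mod d, c div d)))"
    using ij M by (simp add: index_mult_mat_sum reshape_A_def)
  also have "\<dots> = (\<Sum>k<m. \<Sum>l<d. M $$ (i * d + l, k) * cnj (M $$ (j * d + l, k)))"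
    by (rule sum_div_mod)
  also have "\<dots> = (\<Sum>l<d. (M * mat_adjoint M) $$ (i * d + l, j * d + l))"
    using ij M pair_index_less by (subst sum.swap) (simp add: index_mult_mat_sum)
  also have "\<dots> = ptrace_B d (M * mat_adjoint M) $$ (i, j)" using ij by (simp add: ptrace_B_def)
  finally show "(reshape_A d M * mat_adjoint (reshape_A d M)) $$ (i, j)
      = ptrace_B d (M * mat_adjoint M) $$ (i, j)" .
qed (simp_all add: reshape_A_def ptrace_B_def)

lemma reshape_B_mult_adjoint:
  assumes M: "M \<in> carrier_mat (d * d) m"
  shows "reshape_B d M * mat_adjoint (reshape_B d M) = ptrace_A d (M * mat_adjoint M)"
proof (rule eq_matI)
  fix i j assume "i < dim_row (ptrace_A d (M * mat_adjoint M))"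
    "j < dim_col (ptrace_A d (M * mat_adjoint M))"
  then have ij: "i < d" "j < d" by (auto simp: ptrace_A_def)
  have "(reshape_B d M * mat_adjoint (reshape_B d M)) $$ (i, j)
      = (\<Sum>c<m * d. M $$ ((c mod d) * d + i, c div d) * cnj (M $$ ((c mod d) * d + j, c div d)))"
    using ij M by (simp add: index_mult_mat_sum reshape_B_def)
  also have "\<dots> = (\<Sum>k<m. \<Sum>l<d. M $$ (l * d + i, k) * cnj (M $$ (l * d + j, k)))"
    by (rule sum_div_mod)
  also have "\<dots> = (\<Sum>l<d. (M * mat_adjoint M) $$ (l * d + i, l * d + j))"
    using ij M pair_index_less by (subst sum.swap) (simp add: index_mult_mat_sum)
  also have "\<dots> = ptrace_A d (M * mat_adjoint M) $$ (i, j)" using ij by (simp add: ptrace_A_def)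
  finally show "(reshape_B d M * mat_adjoint (reshape_B d M)) $$ (i, j)
      = ptrace_A d (M * mat_adjoint M) $$ (i, j)" .
qed (simp_all add: reshape_B_def ptrace_A_def)

text \<open>Row \<open>r = a d + b\<close> of \<open>W\<close> has its single nonzero entry in column \<open>b d + a\<close>.\<close>
lemma mtrace_swap_op_mult:
  assumes \<rho>: "\<rho> \<in> carrier_mat (d * d) (d * d)"
  shows "mtrace (swap_op d * \<rho>) = (\<Sum>a<d. \<Sum>b<d. \<rho> $$ (b * d + a, a * d + b))"
proof -
  have "(swap_op d * \<rho>) $$ (r, r) = \<rho> $$ ((r mod d) * d + r div d, r)" if r: "r < d * d" for r
  proof -
    have d: "0 < d" using r by (cases d) auto
    have "r div d < d" using r by (simp add: less_mult_imp_div_less)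
    have "r div d = c mod d \<and> r mod d = c div d \<longleftrightarrow> c = (r mod d) * d + r div d" for c
    proof
      assume "r div d = c mod d \<and> r mod d = c div d"
      then have "c div d = r mod d" "c mod d = r div d" by simp_all
      then show "c = (r mod d) * d + r div d" using div_mult_mod_eq[of c d] by simp
    next
      assume "c = (r mod d) * d + r div d"
      then show "r div d = c mod d \<and> r mod d = c div d" using \<open>r div d < d\<close> d by simp
    qed
    then have "(swap_op d * \<rho>) $$ (r, r)
        = (\<Sum>c<d * d. if c = (r mod d) * d + r div d then \<rho> $$ (c, r) else 0)"
      using r \<rho> by (simp add: index_mult_mat_sum swap_op_def if_distrib[of "\<lambda>x. x * _"] cong: if_cong)
    also have "\<dots> = \<rho> $$ ((r mod d) * d + r div d, r)"
      using r d \<open>r div d < d\<close> pair_index_less[of "r mod d" d "r div d"] by simp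
    finally show ?thesis .
  qed
  then have "mtrace (swap_op d * \<rho>) = (\<Sum>r<d * d. \<rho> $$ ((r mod d) * d + r div d, r))"
    using \<rho> by (simp add: mtrace_def swap_op_def)
  also have "\<dots> = (\<Sum>a<d. \<Sum>b<d. \<rho> $$ (b * d + a, a * d + b))"
    unfolding sum_lessThan_mult by (intro sum.cong refl) simp
  finally show ?thesis .
qed

lemma mtrace_reshape:
  assumes M: "M \<in> carrier_mat (d * d) m"
  shows "mtrace (mat_adjoint (reshape_A d M) * reshape_B d M) = mtrace (swap_op d * (M * mat_adjoint M))"
proof -
  have "mtrace (mat_adjoint (reshape_A d M) * reshape_B d M)
      = (\<Sum>c<m * d. \<Sum>i<d. cnj (M $$ (i * d + c mod d, c div d)) * M $$ ((c mod d) * d + i, c div d))"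
    using M reshape_carrier[OF M] by (simp add: mtrace_mult_sum[of _ "m * d" d] reshape_A_def reshape_B_def)
  also have "\<dots> = (\<Sum>k<m. \<Sum>l<d. \<Sum>i<d. cnj (M $$ (i * d + l, k)) * M $$ (l * d + i, k))"
    by (rule sum_div_mod)
  also have "\<dots> = (\<Sum>i<d. \<Sum>l<d. \<Sum>k<m. M $$ (l * d + i, k) * cnj (M $$ (i * d + l, k)))"
    by (subst sum.swap, subst (2) sum.swap, subst sum.swap) (simp add: mult.commute)
  also have "\<dots> = (\<Sum>i<d. \<Sum>l<d. (M * mat_adjoint M) $$ (l * d + i, i * d + l))"
    using M pair_index_less by (intro sum.cong refl) (simp add: index_mult_mat_sum)
  also have "\<dots> = mtrace (swap_op d * (M * mat_adjoint M))"
    using M by (simp add: mtrace_swap_op_mult)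
  finally show ?thesis .
qed

lemma swap_test_antisym_prob_eq:
  assumes \<rho>: "\<rho> \<in> carrier_mat (d * d) (d * d)"
  shows "swap_test_antisym_prob d \<rho> = (Re (mtrace \<rho>) - Re (mtrace (swap_op d * \<rho>))) / 2"
proof -
  have W: "swap_op d \<in> carrier_mat (d * d) (d * d)" by (simp add: swap_op_def)
  have "(1 / 2 :: complex) \<cdot>\<^sub>m (1\<^sub>m (d * d) - swap_op d) * \<rho>
      = (1 / 2 :: complex) \<cdot>\<^sub>m ((1\<^sub>m (d * d) - swap_op d) * \<rho>)"
    by (rule mult_smult_assoc_mat[OF minus_carrier_mat[OF W] \<rho>])
  also have "(1\<^sub>m (d * d) - swap_op d) * \<rho> = \<rho> - swap_op d * \<rho>"
    using minus_mult_distrib_mat[OF one_carrier_mat W \<rho>] \<rho> by simp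
  finally have "(1 / 2 :: complex) \<cdot>\<^sub>m (1\<^sub>m (d * d) - swap_op d) * \<rho>
      = (1 / 2 :: complex) \<cdot>\<^sub>m (\<rho> - swap_op d * \<rho>)" .
  moreover have "swap_op d * \<rho> \<in> carrier_mat (d * d) (d * d)"
    "\<rho> - swap_op d * \<rho> \<in> carrier_mat (d * d) (d * d)"
    using W \<rho> by auto
  ultimately show ?thesis
    using \<rho> by (simp add: swap_test_antisym_prob_def mtrace_smult[of _ "d * d"] mtrace_minus[of _ "d * d"])
qed

theorem lemma4p3:
  fixes d :: nat and \<rho> :: "complex mat"
  assumes "density_op (d * d) \<rho>"
  shows "swap_test_antisym_prob d \<rho> \<ge> 1 / 2 - 1 / 2 * fidelity d (ptrace_A d \<rho>) (ptrace_B d \<rho>)"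
proof -
  have \<rho>: "psd (d * d) \<rho>" "mtrace \<rho> = 1" using assms by (auto simp: density_op_def)
  define K where "K = msqrt (d * d) \<rho>"
  have K: "K \<in> carrier_mat (d * d) (d * d)" and \<rho>K: "\<rho> = K * mat_adjoint K"
    using psd_msqrt[OF \<rho>(1)] unfolding K_def by (auto simp: psd_iff hermitian_def)
  have "swap_test_antisym_prob d \<rho>
      = 1 / 2 - 1 / 2 * Re (mtrace (mat_adjoint (reshape_A d K) * reshape_B d K))"
    using swap_test_antisym_prob_eq[OF psd_carrier[OF \<rho>(1)]] mtrace_reshape[OF K] \<rho>(2) \<rho>K by simp
  moreover have "Re (mtrace (mat_adjoint (reshape_A d K) * reshape_B d K))
      \<le> fidelity d (ptrace_A d \<rho>) (ptrace_B d \<rho>)"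
    using Re_mtrace_le_fidelity[OF reshape_carrier(2)[OF K, of d] reshape_carrier(1)[OF K, of d]]
      reshape_A_mult_adjoint[OF K] reshape_B_mult_adjoint[OF K] \<rho>K
    by simp
  ultimately show ?thesis by simp
qed

end
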